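(* Let $S_0$ be a nonempty set and let $\mathcal{G}$ be a group acting simply transitively on $S_0$ (for every $x,y \in S_0$ there is a unique $T \in \mathcal{G}$ with $Tx = y$). Let $S$ be a collection of subsets of $S_0$, partially ordered by set inclusion, and extend the action of $\mathcal{G}$ to subsets by $Ta = \{Tx : x \in a\}$ (assume $S$ is closed under this action). Suppose every $a \in S$ has the fixed point property with respect to $\mathcal{G}$: for all $T \in \mathcal{G}$, $Ta \subseteq a$ implies there exists $x \in a$ with $Tx = x$. Then on the set $S/\mathcal{G}$ of orbits, the strong relation ($A \preceq B$ iff for all $a \in A$ there is $b \in B$ with $a \subseteq b$) and the weak relation ($A \preceq B$ iff there exist $a \in A$, $b \in B$ with $a \subseteq b$) are identical, and this relation is a partial order on $S/\mathcal{G}$. *)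

theory Defs
  imports "HOL-Algebra.Group_Action"
begin

definition set_orbit :: "('g, 'm) monoid_scheme \<Rightarrow> ('g \<Rightarrow> 'b \<Rightarrow> 'b) \<Rightarrow> 'b set \<Rightarrow> 'b set set" where
  "set_orbit G \<phi> a = {\<phi> T ` a | T. T \<in> carrier G}"

definition set_orbits :: "('g, 'm) monoid_scheme \<Rightarrow> ('g \<Rightarrow> 'b \<Rightarrow> 'b) \<Rightarrow> 'b set set \<Rightarrow> 'b set set set" where
  "set_orbits G \<phi> S = set_orbit G \<phi> ` S"

definition strong_le :: "'b set set \<Rightarrow> 'b set set \<Rightarrow> bool" where
  "strong_le A B \<longleftrightarrow> (\<forall>a\<in>A. \<exists>b\<in>B. a \<subseteq> b)"

definition weak_le :: "'b set set \<Rightarrow> 'b set set \<Rightarrow> bool" where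
  "weak_le A B \<longleftrightarrow> (\<exists>a\<in>A. \<exists>b\<in>B. a \<subseteq> b)"

end

theory Submission
  imports Defs
begin

text \<open>
  Every member of an orbit is a translate of every other one, so an inclusion between one member
  of A and one member of B can be transported by the group to any member of A: the weak and the
  strong relation agree. For antisymmetry, A \<preceq> B \<preceq> A yields a member a of A with a \<subseteq> g a.
  Then g\<inverse> a \<subseteq> a, so g\<inverse> fixes a point of a; as the action is free, g = \<one>, hence a is a
  translate of a member of B and the two orbits coincide.
\<close>

lemma strong_le_refl: "strong_le A A"
  unfolding strong_le_def by blast

lemma strong_le_trans: "\<lbrakk> strong_le A B; strong_le B C \<rbrakk> \<Longrightarrow> strong_le A C"
  unfolding strong_le_def by (meson order_trans)

sublocale group_action \<subseteq> group G
  by (rule group_hom.axioms(1)[OF group_hom])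

context group_action
begin

lemma image_one:
  assumes "a \<subseteq> E"
  shows "\<phi> \<one> ` a = a"
proof -
  have "\<phi> \<one> x = x" if "x \<in> E" for x
    using id_eq_one that by (metis restrict_apply')
  then show ?thesis
    using assms by (simp add: subset_eq image_def)
qed

lemma image_mult:
  "\<lbrakk> a \<subseteq> E; g \<in> carrier G; h \<in> carrier G \<rbrakk> \<Longrightarrow> \<phi> (g \<otimes> h) ` a = \<phi> g ` \<phi> h ` a"
  using composition_rule by (auto simp: image_image subset_iff intro!: image_cong)

lemma image_inv_image:
  assumes "a \<subseteq> E" "g \<in> carrier G"
  shows "\<phi> (inv g) ` \<phi> g ` a = a"
proof -
  have "\<phi> (inv g) ` \<phi> g ` a = \<phi> (inv g \<otimes> g) ` a"
    using assms by (intro image_mult[symmetric] inv_closed)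
  also have "\<dots> = a"
    using assms by (metis l_inv image_one)
  finally show ?thesis .
qed

lemma image_subset_carrier: "\<lbrakk> a \<subseteq> E; g \<in> carrier G \<rbrakk> \<Longrightarrow> \<phi> g ` a \<subseteq> E"
  using surj_prop by blast

lemma image_mem_set_orbit: "g \<in> carrier G \<Longrightarrow> \<phi> g ` a \<in> set_orbit G \<phi> a"
  unfolding set_orbit_def by blast

lemma self_mem_set_orbit: "a \<subseteq> E \<Longrightarrow> a \<in> set_orbit G \<phi> a"
  using image_mem_set_orbit[OF one_closed, of a] by (simp only: image_one)

lemma set_orbit_image:
  assumes "a \<subseteq> E" "g \<in> carrier G"
  shows "set_orbit G \<phi> (\<phi> g ` a) = set_orbit G \<phi> a"
proof
  show "set_orbit G \<phi> (\<phi> g ` a) \<subseteq> set_orbit G \<phi> a"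
  proof
    fix c assume "c \<in> set_orbit G \<phi> (\<phi> g ` a)"
    then obtain h where h: "h \<in> carrier G" "c = \<phi> h ` \<phi> g ` a"
      unfolding set_orbit_def by blast
    then have "c = \<phi> (h \<otimes> g) ` a"
      using assms by (simp only: image_mult)
    then show "c \<in> set_orbit G \<phi> a"
      using h(1) assms(2) image_mem_set_orbit by simp
  qed
next
  show "set_orbit G \<phi> a \<subseteq> set_orbit G \<phi> (\<phi> g ` a)"
  proof
    fix c assume "c \<in> set_orbit G \<phi> a"
    then obtain h where h: "h \<in> carrier G" "c = \<phi> h ` a"
      unfolding set_orbit_def by blast
    have "\<phi> (h \<otimes> inv g) ` \<phi> g ` a = \<phi> h ` \<phi> (inv g) ` \<phi> g ` a"
      using assms h(1) by (intro image_mult image_subset_carrier inv_closed)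
    also have "\<dots> = c"
      using assms h(2) by (simp only: image_inv_image)
    finally show "c \<in> set_orbit G \<phi> (\<phi> g ` a)"
      using image_mem_set_orbit[of "h \<otimes> inv g" "\<phi> g ` a"] h(1) assms(2) by simp
  qed
qed

lemma set_orbit_eq:
  assumes "a \<subseteq> E" "a' \<in> set_orbit G \<phi> a"
  shows "set_orbit G \<phi> a' = set_orbit G \<phi> a"
proof -
  obtain g where "g \<in> carrier G" "a' = \<phi> g ` a"
    using assms(2) unfolding set_orbit_def by blast
  then show ?thesis
    using set_orbit_image assms(1) by simp
qed

lemma strong_le_set_orbit_mono: "a \<subseteq> b \<Longrightarrow> strong_le (set_orbit G \<phi> a) (set_orbit G \<phi> b)"
  unfolding strong_le_def set_orbit_def by blast

lemma weak_le_set_orbit_imp_strong_le: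
  assumes "a \<subseteq> E" "b \<subseteq> E" "weak_le (set_orbit G \<phi> a) (set_orbit G \<phi> b)"
  shows "strong_le (set_orbit G \<phi> a) (set_orbit G \<phi> b)"
proof -
  obtain a' b' where a': "a' \<in> set_orbit G \<phi> a" and b': "b' \<in> set_orbit G \<phi> b" and "a' \<subseteq> b'"
    using assms(3) unfolding weak_le_def by blast
  have "strong_le (set_orbit G \<phi> a') (set_orbit G \<phi> b')"
    using \<open>a' \<subseteq> b'\<close> by (rule strong_le_set_orbit_mono)
  then show ?thesis
    by (simp only: set_orbit_eq[OF assms(1) a'] set_orbit_eq[OF assms(2) b'])
qed

lemma strong_le_set_orbit_iff_weak_le:
  assumes "a \<subseteq> E" "b \<subseteq> E"
  shows "strong_le (set_orbit G \<phi> a) (set_orbit G \<phi> b) \<longleftrightarrow> weak_le (set_orbit G \<phi> a) (set_orbit G \<phi> b)"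
proof
  assume "strong_le (set_orbit G \<phi> a) (set_orbit G \<phi> b)"
  then show "weak_le (set_orbit G \<phi> a) (set_orbit G \<phi> b)"
    using self_mem_set_orbit[OF assms(1)] unfolding strong_le_def weak_le_def by blast
qed (rule weak_le_set_orbit_imp_strong_le[OF assms])

lemma subset_image_imp_eq_one:
  assumes free: "\<And>g x. \<lbrakk> g \<in> carrier G; x \<in> E; \<phi> g x = x \<rbrakk> \<Longrightarrow> g = \<one>"
    and fixed_point: "\<And>g. \<lbrakk> g \<in> carrier G; \<phi> g ` a \<subseteq> a \<rbrakk> \<Longrightarrow> \<exists>x\<in>a. \<phi> g x = x"
    and "a \<subseteq> E" "g \<in> carrier G" "a \<subseteq> \<phi> g ` a"
  shows "g = \<one>"
proof -
  have "\<phi> (inv g) ` a \<subseteq> \<phi> (inv g) ` \<phi> g ` a"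
    using assms(5) by (rule image_mono)
  also have "\<dots> = a"
    using assms(3,4) by (rule image_inv_image)
  finally obtain x where "x \<in> a" "\<phi> (inv g) x = x"
    using fixed_point assms(4) by blast
  then have "inv g = \<one>"
    using free assms(3,4) by blast
  then show ?thesis
    using assms(4) by (metis inv_inv one_closed inv_one)
qed

lemma set_orbit_antisym:
  assumes free: "\<And>g x. \<lbrakk> g \<in> carrier G; x \<in> E; \<phi> g x = x \<rbrakk> \<Longrightarrow> g = \<one>"
    and fixed_point: "\<And>g. \<lbrakk> g \<in> carrier G; \<phi> g ` a \<subseteq> a \<rbrakk> \<Longrightarrow> \<exists>x\<in>a. \<phi> g x = x"
    and "a \<subseteq> E" "b \<subseteq> E"
    and "strong_le (set_orbit G \<phi> a) (set_orbit G \<phi> b)"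
    and "strong_le (set_orbit G \<phi> b) (set_orbit G \<phi> a)"
  shows "set_orbit G \<phi> a = set_orbit G \<phi> b"
proof -
  obtain b' where "b' \<in> set_orbit G \<phi> b" "a \<subseteq> b'"
    using assms(5) self_mem_set_orbit[OF assms(3)] unfolding strong_le_def by blast
  then obtain h where h: "h \<in> carrier G" "a \<subseteq> \<phi> h ` b"
    unfolding set_orbit_def by blast
  obtain a' where "a' \<in> set_orbit G \<phi> a" "\<phi> h ` b \<subseteq> a'"
    using assms(6) image_mem_set_orbit[OF h(1)] unfolding strong_le_def by blast
  then obtain g where g: "g \<in> carrier G" "\<phi> h ` b \<subseteq> \<phi> g ` a"
    unfolding set_orbit_def by blast
  have "a \<subseteq> \<phi> g ` a"
    using h(2) g(2) by (rule order_trans)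
  with free fixed_point assms(3) g(1) have "g = \<one>"
    by (rule subset_image_imp_eq_one)
  then have "\<phi> h ` b \<subseteq> a"
    using g(2) image_one[OF assms(3)] by simp
  then have "a = \<phi> h ` b"
    using h(2) by (rule subset_antisym[rotated])
  then show ?thesis
    using set_orbit_image[OF assms(4) h(1)] by simp
qed

end

theorem corollary2:
  fixes G (structure) and S0 :: "'b set" and \<phi> :: "'g \<Rightarrow> 'b \<Rightarrow> 'b" and S :: "'b set set"
  assumes "group_action G S0 \<phi>"
    and "S0 \<noteq> {}"
    and "\<forall>x\<in>S0. \<forall>y\<in>S0. \<exists>!T. T \<in> carrier G \<and> \<phi> T x = y"
    and "\<forall>a\<in>S. a \<subseteq> S0"
    and "\<forall>T\<in>carrier G. \<forall>a\<in>S. \<phi> T ` a \<in> S"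
    and "\<forall>a\<in>S. \<forall>T\<in>carrier G. \<phi> T ` a \<subseteq> a \<longrightarrow> (\<exists>x\<in>a. \<phi> T x = x)"
  shows "(\<forall>A\<in>set_orbits G \<phi> S. \<forall>B\<in>set_orbits G \<phi> S. strong_le A B \<longleftrightarrow> weak_le A B)
         \<and> partial_order_on (set_orbits G \<phi> S)
             {(A, B). A \<in> set_orbits G \<phi> S \<and> B \<in> set_orbits G \<phi> S \<and> strong_le A B}"
proof -
  interpret group_action G S0 \<phi> by fact
  have free: "T = \<one>" if "T \<in> carrier G" "x \<in> S0" "\<phi> T x = x" for T x
  proof -
    have "\<phi> \<one> x = x"
      using image_one[of "{x}"] that(2) by simp
    then show ?thesis
      using assms(3) that by (metis one_closed)
  qed
  have antisym: "A = B"
    if A: "A \<in> set_orbits G \<phi> S" and B: "B \<in> set_orbits G \<phi> S"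
      and le: "strong_le A B" "strong_le B A" for A B
  proof -
    obtain a b where a: "a \<in> S" "A = set_orbit G \<phi> a" and b: "b \<in> S" "B = set_orbit G \<phi> b"
      using A B unfolding set_orbits_def by blast
    have "\<And>T. \<lbrakk> T \<in> carrier G; \<phi> T ` a \<subseteq> a \<rbrakk> \<Longrightarrow> \<exists>x\<in>a. \<phi> T x = x"
      using assms(6) a(1) by blast
    with free have "set_orbit G \<phi> a = set_orbit G \<phi> b"
      by (rule set_orbit_antisym) (use assms(4) a b le in auto)
    then show ?thesis
      using a(2) b(2) by simp
  qed
  have "partial_order_on (set_orbits G \<phi> S)
          {(A, B). A \<in> set_orbits G \<phi> S \<and> B \<in> set_orbits G \<phi> S \<and> strong_le A B}"
    unfolding partial_order_on_def preorder_on_def refl_on_def trans_def antisym_def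
    using strong_le_refl strong_le_trans antisym by blast
  then show ?thesis
    using strong_le_set_orbit_iff_weak_le assms(4) unfolding set_orbits_def by blast
qed

end
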